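(* Let $X$ be a smooth toric variety with fan $\Sigma$, let $\sigma\in\Sigma$ be a $2$-dimensional cone with $\sigma(1)=\{\rho_1,\rho_2\}$, and let $X'$ be the toric variety of the star subdivision $\Sigma'$ of $\Sigma$ relative to $\sigma$ (the blow-up of $X$ along $\overline{O_\sigma}$), with $E$ the $T$-invariant prime divisor of the new ray generated by $v_\sigma=v_{\rho_1}+v_{\rho_2}$. Let $F(x,y)=x+y-vxy$ with $v\in R$. Let $\pi_*: R\llbracket \mathrm{CDiv}_T(X') \rrbracket_F/I_{\Sigma'} \to R\llbracket \mathrm{CDiv}_T(X) \rrbracket_F/I_\Sigma$ be a homomorphism of $R\llbracket \mathrm{CDiv}_T(X) \rrbracket_F/I_\Sigma$-modules (the source being a module via $\pi^*$) such that $\pi_*(1)=1$ and $\pi_*(x_{D_{\rho,\Sigma'}})=x_{D_{\rho,\Sigma}}$ for every $\rho\in\Sigma(1)$. Write $x_i$ for both $x_{D_{\rho_i,\Sigma'}}$ and $x_{D_{\rho_i,\Sigma}}$, $i=1,2$. Then \[ \pi_*(x_E)=v\,x_1x_2,\qquad \pi_*(x_E^n)=v\sum_{i=1}^{n}x_1^{n+1-i}x_2^i-\sum_{i=1}^{n-1}x_1^{n-i}x_2^i \ (n\geq 2), \] \[ \pi_*(x_a^s x_E^t)=x_a\,x_b^t\,(x_a-_F x_b)^{s-1}\quad (s\geq1,\ t\geq0,\ \{a,b\}=\{1,2\}). \]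
   Context: Let $R$ be a commutative ring and $F$ a one-dimensional commutative formal group law over $R$; write $x+_F y=F(x,y)$ and $x-_F y = x+_F \chi(y)$ where $\chi$ is the formal inverse. For an abelian group $M$, the formal group ring $R\llbracket M\rrbracket_F$ is the quotient of the completion of $R[x_\lambda:\lambda\in M]$ at the kernel of the augmentation $x_\lambda\mapsto0$ by the closure of the ideal generated by $x_0$ and $x_{\lambda+\mu}-(x_\lambda+_F x_\mu)$; classes are denoted $x_\lambda$. $T$ is a split torus with cocharacter lattice $T_*$. A smooth toric variety $X$ has fan $\Sigma$ in $T_*$; $\Sigma(1)$ its rays, $\theta(1)$ the rays of a cone $\theta$, $v_\rho$ the primitive generator of $\rho$. For a fan $\Delta$ with toric variety $Y$, $\mathrm{CDiv}_T(Y)=\bigoplus_{\rho\in\Delta(1)}\mathbb{Z}D_{\rho,\Delta}$ (free on $T$-invariant prime divisors), and $I_\Delta$ is the ideal of $R\llbracket\mathrm{CDiv}_T(Y)\rrbracket_F$ generated by $\prod_{\rho\in S}x_{D_{\rho,\Delta}}$ over all $S\subseteq\Delta(1)$ with $S\not\subseteq\theta(1)$ for every cone $\theta\in\Delta$. The star subdivision of $\Sigma$ relative to $\sigma$ is $\Sigma'=\{\theta\in\Sigma:\sigma\not\subseteq\theta\}\cup\bigcup_{\sigma\subseteq\theta}\{\mathrm{cone}(S): S\subseteq\{v_\sigma\}\cup\{v_\rho:\rho\in\theta(1)\},\ \{v_\rho:\rho\in\sigma(1)\}\not\subseteq S\}$, where $v_\sigma=\sum_{\rho\in\sigma(1)}v_\rho$;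 thus $\Sigma'(1)=\Sigma(1)\cup\{\widetilde\rho\}$ with $\widetilde\rho$ generated by $v_\sigma$, $E=D_{\widetilde\rho,\Sigma'}$, and $\mathrm{CDiv}_T(X')=\mathrm{CDiv}_T(X)\oplus\mathbb{Z}E$. The pull-back $\pi^*: R\llbracket\mathrm{CDiv}_T(X)\rrbracket_F/I_\Sigma\to R\llbracket\mathrm{CDiv}_T(X')\rrbracket_F/I_{\Sigma'}$ is the $R$-algebra homomorphism with $x_{D_{\rho,\Sigma}}\mapsto x_{D_{\rho,\Sigma'}}$ if $\rho\notin\sigma(1)$ and $x_{D_{\rho,\Sigma}}\mapsto x_{D_{\rho,\Sigma'}+E}=x_{D_{\rho,\Sigma'}}+_F x_E$ if $\rho\in\sigma(1)$. *)

theory Defs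
  imports Complex_Main "HOL-Library.Function_Algebras" "HOL-Algebra.QuotRing"
begin

text \<open>The lattice T_* is Z^d, modelled as functions 'd => int with 'd a finite type.
  A smooth (hence simplicial) cone is determined by the set of primitive generators of
  its rays, so a smooth fan is encoded as the set of the ray-generator sets of its cones.\<close>

definition rcone :: "('d::finite \<Rightarrow> int) set \<Rightarrow> ('d \<Rightarrow> real) set" where
  "rcone S = {x. \<exists>c. (\<forall>w\<in>S. c w \<ge> 0) \<and> (\<forall>i. x i = (\<Sum>w\<in>S. c w * real_of_int (w i)))}"

definition part_of_Z_basis :: "('d::finite \<Rightarrow> int) set \<Rightarrow> bool" where
  "part_of_Z_basis S \<longleftrightarrow>
     (\<exists>B. S \<subseteq> B \<and> finite B \<and> card B = card (UNIV :: 'd set) \<and>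
          (\<forall>w::'d \<Rightarrow> int. \<exists>c. \<forall>i. w i = (\<Sum>b\<in>B. c b * b i)))"

definition smooth_fan :: "('d::finite \<Rightarrow> int) set set \<Rightarrow> bool" where
  "smooth_fan Fan \<longleftrightarrow> finite Fan \<and> Fan \<noteq> {} \<and>
     (\<forall>\<theta>\<in>Fan. \<forall>\<tau>. \<tau> \<subseteq> \<theta> \<longrightarrow> \<tau> \<in> Fan) \<and>
     (\<forall>\<theta>\<in>Fan. part_of_Z_basis \<theta>) \<and>
     (\<forall>\<theta>\<in>Fan. \<forall>\<theta>'\<in>Fan. rcone \<theta> \<inter> rcone \<theta>' = rcone (\<theta> \<inter> \<theta>'))"

definition rays :: "'a set set \<Rightarrow> 'a set" where
  "rays Fan = {\<rho>. {\<rho>} \<in> Fan}"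

definition star_subdivision ::
  "('d::finite \<Rightarrow> int) set set \<Rightarrow> ('d \<Rightarrow> int) set \<Rightarrow> ('d \<Rightarrow> int) set set" where
  "star_subdivision Fan \<sigma> =
     {\<theta>\<in>Fan. \<not> \<sigma> \<subseteq> \<theta>} \<union>
     (\<Union>\<theta>\<in>{\<theta>\<in>Fan. \<sigma> \<subseteq> \<theta>}. {S. S \<subseteq> insert (\<Sum>w\<in>\<sigma>. w) \<theta> \<and> \<not> \<sigma> \<subseteq> S})"

text \<open>For the free abelian group CDiv_T = Z^{Sigma(1)} the formal group ring
  R[[CDiv_T]]_F is the power series ring R[[x_{D_rho} : rho in Sigma(1)]].\<close>

definition mps_mult :: "(('v \<Rightarrow> nat) \<Rightarrow> 'r::comm_ring_1) \<Rightarrow> (('v \<Rightarrow> nat) \<Rightarrow> 'r) \<Rightarrow> ('v \<Rightarrow> nat) \<Rightarrow> 'r" where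
  "mps_mult f g = (\<lambda>\<alpha>. \<Sum>\<beta>\<in>{\<beta>. \<beta> \<le> \<alpha>}. f \<beta> * g (\<alpha> - \<beta>))"

definition mps_const :: "'r::comm_ring_1 \<Rightarrow> ('v \<Rightarrow> nat) \<Rightarrow> 'r" where
  "mps_const r = (\<lambda>\<alpha>. if \<alpha> = 0 then r else 0)"

definition mps_pow :: "(('v \<Rightarrow> nat) \<Rightarrow> 'r::comm_ring_1) \<Rightarrow> nat \<Rightarrow> ('v \<Rightarrow> nat) \<Rightarrow> 'r" where
  "mps_pow f n = (mps_mult f ^^ n) (mps_const 1)"

definition mps_smult :: "'r::comm_ring_1 \<Rightarrow> (('v \<Rightarrow> nat) \<Rightarrow> 'r) \<Rightarrow> ('v \<Rightarrow> nat) \<Rightarrow> 'r" where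
  "mps_smult r f = (\<lambda>\<alpha>. r * f \<alpha>)"

definition mvar :: "'v \<Rightarrow> ('v \<Rightarrow> nat) \<Rightarrow> 'r::comm_ring_1" where
  "mvar x = (\<lambda>\<alpha>. if \<alpha> = (\<lambda>y. if y = x then 1 else 0) then 1 else 0)"

definition sqfree_mon :: "'v set \<Rightarrow> ('v \<Rightarrow> nat) \<Rightarrow> 'r::comm_ring_1" where
  "sqfree_mon S = (\<lambda>\<alpha>. if \<alpha> = (\<lambda>y. if y \<in> S then 1 else 0) then 1 else 0)"

definition mps :: "'v set \<Rightarrow> (('v \<Rightarrow> nat) \<Rightarrow> 'r::comm_ring_1) ring" where
  "mps V = \<lparr>carrier = {f. \<forall>\<alpha>. f \<alpha> \<noteq> 0 \<longrightarrow> finite {x. \<alpha> x \<noteq> 0} \<and> (\<forall>x. \<alpha> x \<noteq> 0 \<longrightarrow> x \<in> V)},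
            mult = mps_mult, one = mps_const 1, zero = (\<lambda>\<alpha>. 0), add = (+)\<rparr>"

definition SR_ideal :: "('d::finite \<Rightarrow> int) set set \<Rightarrow> ((('d \<Rightarrow> int) \<Rightarrow> nat) \<Rightarrow> 'r::comm_ring_1) set" where
  "SR_ideal Fan = Idl\<^bsub>mps (rays Fan)\<^esub>
     {sqfree_mon S | S. S \<subseteq> rays Fan \<and> (\<forall>\<theta>\<in>Fan. \<not> S \<subseteq> \<theta>)}"

definition face_ring :: "('d::finite \<Rightarrow> int) set set \<Rightarrow> ((('d \<Rightarrow> int) \<Rightarrow> nat) \<Rightarrow> 'r::comm_ring_1) set ring" where
  "face_ring Fan = mps (rays Fan) Quot SR_ideal Fan"

definition cls :: "('d::finite \<Rightarrow> int) set set \<Rightarrow> ((('d \<Rightarrow> int) \<Rightarrow> nat) \<Rightarrow> 'r::comm_ring_1) \<Rightarrow> ((('d \<Rightarrow> int) \<Rightarrow> nat) \<Rightarrow> 'r) set" where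
  "cls Fan f = SR_ideal Fan +>\<^bsub>mps (rays Fan)\<^esub> f"

definition fgl_add :: "'r::comm_ring_1 \<Rightarrow> (('v \<Rightarrow> nat) \<Rightarrow> 'r) \<Rightarrow> (('v \<Rightarrow> nat) \<Rightarrow> 'r) \<Rightarrow> ('v \<Rightarrow> nat) \<Rightarrow> 'r" where
  "fgl_add v a b = a + b - mps_smult v (mps_mult a b)"

text \<open>Formal inverse of F applied to the variable x_b:
  chi(x_b) = - x_b / (1 - v x_b) = - sum_{k>=0} v^k x_b^(k+1).\<close>
definition fgl_inv_var :: "'r::comm_ring_1 \<Rightarrow> 'v \<Rightarrow> ('v \<Rightarrow> nat) \<Rightarrow> 'r" where
  "fgl_inv_var v b = (\<lambda>\<alpha>. if 1 \<le> \<alpha> b \<and> (\<forall>y. y \<noteq> b \<longrightarrow> \<alpha> y = 0) then - (v ^ (\<alpha> b - 1)) else 0)"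

definition fgl_sub_var :: "'r::comm_ring_1 \<Rightarrow> 'v \<Rightarrow> 'v \<Rightarrow> ('v \<Rightarrow> nat) \<Rightarrow> 'r" where
  "fgl_sub_var v a b = fgl_add v (mvar a) (fgl_inv_var v b)"

end

theory Submission
  imports Defs
begin

(*
  Write x1, x2 and y1, y2 for the classes of the divisors of the two rays of sigma on X and on X',
  e for x_E and c for v.  Then pi^* x_i = y_i + e - c y_i e, while y1 y2 = 0 because the two rays
  span no cone of the star subdivision.  Hence y1 e = y1 pi^* x2 and (pi^* x1 - e)(pi^* x2 - e) = 0,
  i.e. e^2 = pi^*(x1 + x2) e - pi^*(x1 x2).  Applying pi_* to pi^* x1 and using the projection
  formula gives pi_* e = c x1 x2, and the quadratic relation makes pi_*(e^n) a solution of the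
  recurrence p(n+2) = (x1 + x2) p(n+1) - x1 x2 p(n), whose solution is the stated sum.
  For the other monomials, y1^s e^t = pi^*(x2^t) y1^s and y1^2 pi^*(1 - c x2) = y1 pi^*(x1 - x2);
  as 1 - c x2 is a unit and (x1 -_F x2)(1 - c x2) = x1 - x2, induction on s gives
  pi_*(y1^s) = x1 (x1 -_F x2)^(s-1).
*)

section \<open>Two computations in commutative rings\<close>

definition mixed_powers :: "('a, 'b) ring_scheme \<Rightarrow> 'a \<Rightarrow> 'a \<Rightarrow> nat \<Rightarrow> 'a" where
  "mixed_powers R x y m = (\<Oplus>\<^bsub>R\<^esub>i\<in>{1..m}. x [^]\<^bsub>R\<^esub> (m + 1 - i) \<otimes>\<^bsub>R\<^esub> y [^]\<^bsub>R\<^esub> i)"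

context cring
begin

lemma mixed_powers_closed:
  "x \<in> carrier R \<Longrightarrow> y \<in> carrier R \<Longrightarrow> mixed_powers R x y m \<in> carrier R"
  unfolding mixed_powers_def by (intro finsum_closed) auto

lemma mixed_powers_0: "mixed_powers R x y 0 = \<zero>"
  by (simp add: mixed_powers_def)

lemma mixed_powers_Suc:
  assumes "x \<in> carrier R" "y \<in> carrier R"
  shows "mixed_powers R x y (Suc m) = x \<otimes> mixed_powers R x y m \<oplus> x \<otimes> y [^] Suc m"
proof -
  have "{1..Suc m} = insert (Suc m) {1..m}"
    by auto
  then have "mixed_powers R x y (Suc m) =
             x [^] (1::nat) \<otimes> y [^] Suc m \<oplus> (\<Oplus>i\<in>{1..m}. x [^] (Suc m + 1 - i) \<otimes> y [^] i)"
    using assms by (simp add: mixed_powers_def finsum_insert del: nat_pow_Suc)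
  also have "(\<Oplus>i\<in>{1..m}. x [^] (Suc m + 1 - i) \<otimes> y [^] i) =
             (\<Oplus>i\<in>{1..m}. x \<otimes> (x [^] (m + 1 - i) \<otimes> y [^] i))"
  proof (rule finsum_cong')
    fix i
    assume "i \<in> {1..m}"
    then have "Suc m + 1 - i = Suc (m + 1 - i)"
      by auto
    then show "x [^] (Suc m + 1 - i) \<otimes> y [^] i = x \<otimes> (x [^] (m + 1 - i) \<otimes> y [^] i)"
      using assms by (simp add: m_ac)
  qed (use assms in auto)
  also have "\<dots> = x \<otimes> mixed_powers R x y m"
    using assms by (simp add: mixed_powers_def finsum_rdistr)
  finally show ?thesis
    using assms mixed_powers_closed by (simp add: a_comm)
qed

lemma mixed_powers_rec:
  assumes "x \<in> carrier R" "y \<in> carrier R"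
  shows "mixed_powers R x y (Suc (Suc m)) =
         (x \<oplus> y) \<otimes> mixed_powers R x y (Suc m) \<ominus> (x \<otimes> y) \<otimes> mixed_powers R x y m"
proof -
  let ?G = "mixed_powers R x y"
  note closed = assms mixed_powers_closed[OF assms] nat_pow_closed[OF assms(2)]
  have "(x \<oplus> y) \<otimes> ?G (Suc m) \<ominus> (x \<otimes> y) \<otimes> ?G m = x \<otimes> ?G (Suc m) \<oplus> y \<otimes> ?G (Suc m) \<ominus> (x \<otimes> y) \<otimes> ?G m"
    using closed by algebra
  also have "\<dots> = x \<otimes> ?G (Suc m) \<oplus> y \<otimes> (x \<otimes> ?G m \<oplus> x \<otimes> y [^] Suc m) \<ominus> (x \<otimes> y) \<otimes> ?G m"
    by (simp only: mixed_powers_Suc[OF assms])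
  also have "\<dots> = x \<otimes> ?G (Suc m) \<oplus> x \<otimes> (y [^] Suc m \<otimes> y)"
    using closed by algebra
  also have "\<dots> = ?G (Suc (Suc m))"
    using assms by (simp add: mixed_powers_Suc[of x y "Suc m"])
  finally show ?thesis ..
qed

lemma mixed_powers_recurrence_solution:
  assumes "x \<in> carrier R" "y \<in> carrier R" "c \<in> carrier R" "\<And>n. p n \<in> carrier R"
    and "p 0 = \<one>" "p 1 = c \<otimes> (x \<otimes> y)"
    and rec: "\<And>n. p (Suc (Suc n)) = (x \<oplus> y) \<otimes> p (Suc n) \<ominus> (x \<otimes> y) \<otimes> p n"
  shows "p (Suc n) = c \<otimes> mixed_powers R x y (Suc n) \<ominus> mixed_powers R x y n"
proof -
  let ?G = "mixed_powers R x y"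
  note closed = assms(1-3) mixed_powers_closed[OF assms(1,2)]
  have "p (Suc n) = c \<otimes> ?G (Suc n) \<ominus> ?G n \<and> p (Suc (Suc n)) = c \<otimes> ?G (Suc (Suc n)) \<ominus> ?G (Suc n)"
  proof (induction n)
    case 0
    have "?G 1 = x \<otimes> y" "?G 2 = x \<otimes> (x \<otimes> y) \<oplus> x \<otimes> (y \<otimes> y)"
      using mixed_powers_Suc[OF assms(1,2), of 0] mixed_powers_Suc[OF assms(1,2), of 1] closed
      by (simp_all add: mixed_powers_0 numeral_2_eq_2)
    moreover have "p 2 = (x \<oplus> y) \<otimes> (c \<otimes> (x \<otimes> y)) \<ominus> (x \<otimes> y) \<otimes> \<one>"
      using rec[of 0] assms(5,6) by (simp add: numeral_2_eq_2)
    ultimately show ?case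
      using assms(6) closed by (simp add: mixed_powers_0 numeral_2_eq_2 [symmetric]) algebra
  next
    case (Suc n)
    then have "p (Suc (Suc (Suc n))) =
               (x \<oplus> y) \<otimes> (c \<otimes> ?G (Suc (Suc n)) \<ominus> ?G (Suc n)) \<ominus> (x \<otimes> y) \<otimes> (c \<otimes> ?G (Suc n) \<ominus> ?G n)"
      using rec[of "Suc n"] by simp
    also have "\<dots> = c \<otimes> ((x \<oplus> y) \<otimes> ?G (Suc (Suc n)) \<ominus> (x \<otimes> y) \<otimes> ?G (Suc n))
                    \<ominus> ((x \<oplus> y) \<otimes> ?G (Suc n) \<ominus> (x \<otimes> y) \<otimes> ?G n)"
      using closed by algebra
    also have "\<dots> = c \<otimes> ?G (Suc (Suc (Suc n))) \<ominus> ?G (Suc (Suc n))"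
      by (simp only: mixed_powers_rec[OF assms(1,2)])
    finally show ?case
      using Suc by simp
  qed
  then show ?thesis ..
qed

lemma formal_inverse_factor:
  assumes "x \<in> carrier R" "y \<in> carrier R" "c \<in> carrier R" "\<chi> \<in> carrier R"
    and inverse: "x \<oplus> \<chi> \<ominus> c \<otimes> (x \<otimes> \<chi>) = \<zero>"
  shows "(y \<oplus> \<chi> \<ominus> c \<otimes> (y \<otimes> \<chi>)) \<otimes> (\<one> \<ominus> c \<otimes> x) = y \<ominus> x"
    and "\<one> \<ominus> c \<otimes> x \<in> Units R"
proof -
  have "\<chi> \<ominus> c \<otimes> (x \<otimes> \<chi>) = (x \<oplus> \<chi> \<ominus> c \<otimes> (x \<otimes> \<chi>)) \<ominus> x"
    using assms(1-4) by algebra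
  also have "\<dots> = \<ominus> x"
    unfolding inverse using assms(1) by (simp add: a_minus_def)
  finally have inv: "\<chi> \<ominus> c \<otimes> (x \<otimes> \<chi>) = \<ominus> x" .
  have "(y \<oplus> \<chi> \<ominus> c \<otimes> (y \<otimes> \<chi>)) \<otimes> (\<one> \<ominus> c \<otimes> x) =
        y \<otimes> (\<one> \<ominus> c \<otimes> x) \<oplus> (\<chi> \<ominus> c \<otimes> (x \<otimes> \<chi>)) \<ominus> c \<otimes> y \<otimes> (\<chi> \<ominus> c \<otimes> (x \<otimes> \<chi>))"
    using assms(1-4) by algebra
  also have "\<dots> = y \<ominus> x"
    unfolding inv using assms(1-4) by algebra
  finally show "(y \<oplus> \<chi> \<ominus> c \<otimes> (y \<otimes> \<chi>)) \<otimes> (\<one> \<ominus> c \<otimes> x) = y \<ominus> x" .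
  have "(\<one> \<ominus> c \<otimes> \<chi>) \<otimes> (\<one> \<ominus> c \<otimes> x) = \<one> \<ominus> c \<otimes> x \<ominus> c \<otimes> (\<chi> \<ominus> c \<otimes> (x \<otimes> \<chi>))"
    using assms(1-4) by algebra
  also have "\<dots> = \<one>"
    unfolding inv using assms(1-4) by algebra
  finally show "\<one> \<ominus> c \<otimes> x \<in> Units R"
    unfolding Units_def using assms(1-4) by (auto intro!: bexI[of _ "\<one> \<ominus> c \<otimes> \<chi>"] simp: m_comm)
qed

end

section \<open>Formal power series\<close>

definition mps_monomials :: "'v set \<Rightarrow> ('v \<Rightarrow> nat) set" where
  "mps_monomials V = {\<alpha>. finite {x. \<alpha> x \<noteq> 0} \<and> {x. \<alpha> x \<noteq> 0} \<subseteq> V}"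

lemma carrier_mps: "carrier (mps V) = {f. \<forall>\<alpha>. f \<alpha> \<noteq> 0 \<longrightarrow> \<alpha> \<in> mps_monomials V}"
  by (auto simp: mps_def mps_monomials_def)

lemma mps_ops:
  "mult (mps V) = mps_mult" "one (mps V) = mps_const 1" "zero (mps V) = (\<lambda>\<alpha>. 0)" "add (mps V) = (+)"
  by (simp_all add: mps_def)

lemma mps_monomials_diff:
  assumes "\<beta> \<le> (\<alpha> :: 'v \<Rightarrow> nat)"
  shows "\<alpha> \<in> mps_monomials V \<longleftrightarrow> \<beta> \<in> mps_monomials V \<and> \<alpha> - \<beta> \<in> mps_monomials V"
proof -
  have "{x. \<alpha> x \<noteq> 0} = {x. \<beta> x \<noteq> 0} \<union> {x. (\<alpha> - \<beta>) x \<noteq> 0}"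
    using assms by (auto simp: le_fun_def) (metis less_le_trans)
  then show ?thesis
    unfolding mps_monomials_def mem_Collect_eq by (simp only: finite_Un Un_subset_iff) blast
qed

lemma finite_below_monomial:
  assumes "finite {x. \<alpha> x \<noteq> 0}"
  shows "finite {\<beta>. \<beta> \<le> (\<alpha> :: 'v \<Rightarrow> nat)}"
proof -
  let ?S = "{x. \<alpha> x \<noteq> 0}"
  have "inj_on (\<lambda>\<beta>. restrict \<beta> ?S) {\<beta>. \<beta> \<le> \<alpha>}"
    unfolding inj_on_def fun_eq_iff le_fun_def restrict_def
    by (metis (mono_tags, lifting) le_zero_eq mem_Collect_eq)
  moreover have "(\<lambda>\<beta>. restrict \<beta> ?S) ` {\<beta>. \<beta> \<le> \<alpha>} \<subseteq> PiE ?S (\<lambda>x. {0..\<alpha> x})"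
    by (auto simp: le_fun_def PiE_iff restrict_def extensional_def split: if_splits)
  moreover have "finite (PiE ?S (\<lambda>x. {0..\<alpha> x}))"
    using assms by (intro finite_PiE) auto
  ultimately show ?thesis
    by (meson finite_imageD finite_subset)
qed

lemma sum_below_reassoc:
  fixes \<alpha> :: "'v \<Rightarrow> nat"
  shows "(\<Sum>\<beta>\<in>{\<beta>. \<beta> \<le> \<alpha>}. \<Sum>\<gamma>\<in>{\<gamma>. \<gamma> \<le> \<beta>}. F \<gamma> (\<beta> - \<gamma>) (\<alpha> - \<beta>)) =
         (\<Sum>\<gamma>\<in>{\<gamma>. \<gamma> \<le> \<alpha>}. \<Sum>\<delta>\<in>{\<delta>. \<delta> \<le> \<alpha> - \<gamma>}. F \<gamma> \<delta> (\<alpha> - \<gamma> - \<delta>))"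
  \<comment> \<open>No finiteness is needed: otherwise both sides are sums over an infinite set, hence 0.\<close>
proof (cases "finite {\<beta>. \<beta> \<le> \<alpha>}")
  case True
  have fin: "finite {\<gamma>. \<gamma> \<le> \<beta>}" "finite {\<delta>. \<delta> \<le> \<alpha> - \<beta>}" if "\<beta> \<le> \<alpha>" for \<beta>
    using that by (auto intro!: finite_subset[OF _ True] intro: order_trans simp: le_fun_def)
  have diff_diff: "\<alpha> - \<gamma> - (\<beta> - \<gamma>) = \<alpha> - \<beta>" if "\<gamma> \<le> \<beta>" "\<beta> \<le> \<alpha>" for \<beta> \<gamma>
  proof
    fix x
    have "\<gamma> x \<le> \<beta> x" "\<beta> x \<le> \<alpha> x"
      using that by (auto simp: le_fun_def)
    then show "(\<alpha> - \<gamma> - (\<beta> - \<gamma>)) x = (\<alpha> - \<beta>) x"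
      by simp
  qed
  have "(\<Sum>\<beta>\<in>{\<beta>. \<beta> \<le> \<alpha>}. \<Sum>\<gamma>\<in>{\<gamma>. \<gamma> \<le> \<beta>}. F \<gamma> (\<beta> - \<gamma>) (\<alpha> - \<beta>)) =
        (\<Sum>(\<beta>, \<gamma>)\<in>Sigma {\<beta>. \<beta> \<le> \<alpha>} (\<lambda>\<beta>. {\<gamma>. \<gamma> \<le> \<beta>}). F \<gamma> (\<beta> - \<gamma>) (\<alpha> - \<beta>))"
    using True fin by (subst sum.Sigma) auto
  also have "\<dots> = (\<Sum>(\<gamma>, \<delta>)\<in>Sigma {\<gamma>. \<gamma> \<le> \<alpha>} (\<lambda>\<gamma>. {\<delta>. \<delta> \<le> \<alpha> - \<gamma>}). F \<gamma> \<delta> (\<alpha> - \<gamma> - \<delta>))"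
    by (rule sum.reindex_bij_witness[where i = "\<lambda>(\<gamma>, \<delta>). (\<gamma> + \<delta>, \<gamma>)" and j = "\<lambda>(\<beta>, \<gamma>). (\<gamma>, \<beta> - \<gamma>)"])
       (auto intro: order_trans simp: diff_diff,
        auto simp: le_fun_def fun_eq_iff diff_le_mono le_diff_conv2 add.commute)
  also have "\<dots> = (\<Sum>\<gamma>\<in>{\<gamma>. \<gamma> \<le> \<alpha>}. \<Sum>\<delta>\<in>{\<delta>. \<delta> \<le> \<alpha> - \<gamma>}. F \<gamma> \<delta> (\<alpha> - \<gamma> - \<delta>))"
    using True fin by (subst sum.Sigma) auto
  finally show ?thesis .
qed simp

lemma mps_mult_assoc: "mps_mult (mps_mult f g) h = mps_mult f (mps_mult g h)"
proof
  fix \<alpha>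
  have "mps_mult (mps_mult f g) h \<alpha> =
        (\<Sum>\<beta>\<in>{\<beta>. \<beta> \<le> \<alpha>}. \<Sum>\<gamma>\<in>{\<gamma>. \<gamma> \<le> \<beta>}. f \<gamma> * g (\<beta> - \<gamma>) * h (\<alpha> - \<beta>))"
    by (simp add: mps_mult_def sum_distrib_right)
  also have "\<dots> = (\<Sum>\<gamma>\<in>{\<gamma>. \<gamma> \<le> \<alpha>}. \<Sum>\<delta>\<in>{\<delta>. \<delta> \<le> \<alpha> - \<gamma>}. f \<gamma> * g \<delta> * h (\<alpha> - \<gamma> - \<delta>))"
    by (rule sum_below_reassoc)
  also have "\<dots> = mps_mult f (mps_mult g h) \<alpha>"
    by (simp add: mps_mult_def sum_distrib_left mult.assoc)
  finally show "mps_mult (mps_mult f g) h \<alpha> = mps_mult f (mps_mult g h) \<alpha>" .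
qed

lemma fun_diff_diff_cancel: "\<beta> \<le> (\<alpha> :: 'v \<Rightarrow> nat) \<Longrightarrow> \<alpha> - (\<alpha> - \<beta>) = \<beta>"
  by (simp add: fun_eq_iff le_fun_def)

lemma mps_mult_commute: "mps_mult f g = mps_mult g f"
proof
  fix \<alpha>
  show "mps_mult f g \<alpha> = mps_mult g f \<alpha>"
    unfolding mps_mult_def
    by (rule sum.reindex_bij_witness[where i = "\<lambda>\<beta>. \<alpha> - \<beta>" and j = "\<lambda>\<beta>. \<alpha> - \<beta>"])
       (auto simp: fun_diff_diff_cancel mult.commute intro: le_funI)
qed

lemma mps_mult_distrib: "mps_mult (f + g) h = mps_mult f h + mps_mult g h"
  by (simp add: mps_mult_def fun_eq_iff distrib_right sum.distrib)

lemma mps_mult_outside: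
  assumes "f \<in> carrier (mps V)" "g \<in> carrier (mps V)" "\<alpha> \<notin> mps_monomials V"
  shows "mps_mult f g \<alpha> = 0"
proof -
  have "f \<beta> * g (\<alpha> - \<beta>) = 0" if "\<beta> \<le> \<alpha>" for \<beta>
  proof -
    have "\<beta> \<notin> mps_monomials V \<or> \<alpha> - \<beta> \<notin> mps_monomials V"
      using assms(3) mps_monomials_diff[OF that] by blast
    moreover have "f \<gamma> = 0" "g \<gamma> = 0" if "\<gamma> \<notin> mps_monomials V" for \<gamma>
      using assms(1,2) that by (auto simp: carrier_mps)
    ultimately show ?thesis
      by auto
  qed
  then show ?thesis
    by (simp add: mps_mult_def)
qed

lemma mps_mult_closed:
  assumes "f \<in> carrier (mps V)" "g \<in> carrier (mps V)"
  shows "mps_mult f g \<in> carrier (mps V)"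
  unfolding carrier_mps using mps_mult_outside[OF assms] by blast

lemma mps_const_closed: "mps_const r \<in> carrier (mps V)"
  by (auto simp: carrier_mps mps_const_def mps_monomials_def)

lemma mps_const_mult:
  assumes g: "g \<in> carrier (mps V)"
  shows "mps_mult (mps_const r) g = mps_smult r g"
proof
  fix \<alpha>
  show "mps_mult (mps_const r) g \<alpha> = mps_smult r g \<alpha>"
  proof (cases "\<alpha> \<in> mps_monomials V")
    case False
    then have "g \<alpha> = 0"
      using g by (auto simp: carrier_mps)
    then show ?thesis
      using False mps_mult_outside[OF mps_const_closed g] by (simp add: mps_smult_def)
  next
    case True
    then have "finite {\<beta>. \<beta> \<le> \<alpha>}"
      by (simp add: mps_monomials_def finite_below_monomial)
    moreover have "mps_mult (mps_const r) g \<alpha> =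
                   (\<Sum>\<beta>\<in>{\<beta>. \<beta> \<le> \<alpha>}. if \<beta> = 0 then r * g (\<alpha> - \<beta>) else 0)"
      unfolding mps_mult_def mps_const_def by (rule sum.cong) auto
    ultimately show ?thesis
      by (simp add: sum.delta' le_fun_def mps_smult_def)
  qed
qed

lemma cring_mps: "cring (mps V :: (('v \<Rightarrow> nat) \<Rightarrow> 'r::comm_ring_1) ring)"
proof (rule cringI)
  show "abelian_group (mps V :: (('v \<Rightarrow> nat) \<Rightarrow> 'r) ring)"
  proof (rule abelian_groupI)
    fix x y :: "('v \<Rightarrow> nat) \<Rightarrow> 'r"
    assume "x \<in> carrier (mps V)" "y \<in> carrier (mps V)"
    then show "x \<oplus>\<^bsub>mps V\<^esub> y \<in> carrier (mps V)"
      by (simp add: carrier_mps mps_ops) (metis add.left_neutral add.right_neutral)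
  next
    fix x :: "('v \<Rightarrow> nat) \<Rightarrow> 'r"
    assume "x \<in> carrier (mps V)"
    then show "\<exists>y\<in>carrier (mps V). y \<oplus>\<^bsub>mps V\<^esub> x = \<zero>\<^bsub>mps V\<^esub>"
      by (intro bexI[of _ "- x"]) (auto simp: carrier_mps mps_ops fun_eq_iff)
  qed (auto simp: carrier_mps mps_ops fun_eq_iff add.assoc add.commute)
next
  show "comm_monoid (mps V :: (('v \<Rightarrow> nat) \<Rightarrow> 'r) ring)"
    by (rule comm_monoidI)
       (auto simp: mps_ops mps_mult_closed mps_const_closed mps_const_mult mps_mult_assoc
          mps_smult_def intro: mps_mult_commute)
qed (simp add: mps_ops mps_mult_distrib)

lemma mps_smult_closed: "g \<in> carrier (mps V) \<Longrightarrow> mps_smult r g \<in> carrier (mps V)"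
  by (simp add: carrier_mps mps_smult_def) (metis mult_zero_right)

lemma mps_smult_eq: "g \<in> carrier (mps V) \<Longrightarrow> mps_smult r g = mps_const r \<otimes>\<^bsub>mps V\<^esub> g"
  by (simp add: mps_ops mps_const_mult)

lemma mps_uminus_eq:
  assumes "g \<in> carrier (mps V)"
  shows "- g = \<ominus>\<^bsub>mps V :: (('v \<Rightarrow> nat) \<Rightarrow> 'r::comm_ring_1) ring\<^esub> g"
proof -
  interpret cring "mps V :: (('v \<Rightarrow> nat) \<Rightarrow> 'r) ring"
    by (rule cring_mps)
  show ?thesis
    using assms by (intro minus_equality[symmetric]) (auto simp: carrier_mps mps_ops fun_eq_iff)
qed

lemma mps_diff_eq:
  "f \<in> carrier (mps V) \<Longrightarrow> g \<in> carrier (mps V) \<Longrightarrow>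
   f - g = f \<ominus>\<^bsub>mps V :: (('v \<Rightarrow> nat) \<Rightarrow> 'r::comm_ring_1) ring\<^esub> g"
  by (simp add: a_minus_def mps_ops mps_uminus_eq[symmetric])

lemma mps_pow_eq:
  assumes "f \<in> carrier (mps V)"
  shows "mps_pow f n = f [^]\<^bsub>mps V :: (('v \<Rightarrow> nat) \<Rightarrow> 'r::comm_ring_1) ring\<^esub> n"
proof -
  interpret cring "mps V :: (('v \<Rightarrow> nat) \<Rightarrow> 'r) ring"
    by (rule cring_mps)
  show ?thesis
  proof (induction n)
    case (Suc n)
    then show ?case
      using assms by (simp add: mps_pow_def mps_ops m_comm) (rule mps_mult_commute)
  qed (simp add: mps_pow_def mps_ops)
qed

lemma mps_pow_closed: "f \<in> carrier (mps V) \<Longrightarrow> mps_pow f n \<in> carrier (mps V)"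
  by (induction n) (simp_all add: mps_pow_def mps_const_closed mps_mult_closed)

lemma mps_sum_eq:
  assumes "f \<in> I \<rightarrow> carrier (mps V)"
  shows "sum f I = finsum (mps V :: (('v \<Rightarrow> nat) \<Rightarrow> 'r::comm_ring_1) ring) f I"
proof -
  interpret cring "mps V :: (('v \<Rightarrow> nat) \<Rightarrow> 'r) ring"
    by (rule cring_mps)
  show ?thesis
    using assms
  proof (induction I rule: infinite_finite_induct)
    case (insert x F)
    then show ?case
      by (simp add: finsum_insert mps_ops)
  qed (simp_all add: mps_ops zero_fun_def finsum_infinite)
qed

lemma mps_sum_closed:
  fixes f :: "'i \<Rightarrow> ('v \<Rightarrow> nat) \<Rightarrow> 'r::comm_ring_1"
  assumes "f \<in> I \<rightarrow> carrier (mps V)"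
  shows "sum f I \<in> carrier (mps V)"
proof -
  interpret cring "mps V :: (('v \<Rightarrow> nat) \<Rightarrow> 'r) ring"
    by (rule cring_mps)
  show ?thesis
    using assms by (simp add: mps_sum_eq)
qed

lemma sqfree_mon_closed:
  assumes "finite S" "S \<subseteq> V"
  shows "sqfree_mon S \<in> carrier (mps V)"
proof -
  have "{x. (if x \<in> S then 1 else 0 :: nat) \<noteq> 0} = S"
    by auto
  then show ?thesis
    using assms by (simp add: carrier_mps sqfree_mon_def mps_monomials_def)
qed

lemma mvar_closed: "a \<in> V \<Longrightarrow> mvar a \<in> carrier (mps V)"
  by (auto simp: carrier_mps mvar_def mps_monomials_def)

lemma mps_mult_mvar:
  assumes a: "a \<in> V" and f: "f \<in> carrier (mps V)"
  shows "mps_mult (mvar a) f \<alpha> = (if 1 \<le> \<alpha> a then f (\<alpha> - 0(a := 1)) else 0)"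
proof (cases "\<alpha> \<in> mps_monomials V")
  case False
  have "0(a := 1) \<in> mps_monomials V"
    using a by (simp add: mps_monomials_def)
  moreover have "0(a := 1) \<le> \<alpha>" if "1 \<le> \<alpha> a"
    using that by (simp add: le_fun_def)
  ultimately have "f (\<alpha> - 0(a := 1)) = 0" if "1 \<le> \<alpha> a"
    using that False f mps_monomials_diff[of "0(a := 1)" \<alpha> V] by (auto simp: carrier_mps)
  then show ?thesis
    using mps_mult_outside[OF mvar_closed[OF a] f False] by simp
next
  case True
  then have "finite {\<beta>. \<beta> \<le> \<alpha>}"
    by (simp add: mps_monomials_def finite_below_monomial)
  moreover have "mps_mult (mvar a) f \<alpha> =
                 (\<Sum>\<beta>\<in>{\<beta>. \<beta> \<le> \<alpha>}. if \<beta> = 0(a := 1) then f (\<alpha> - \<beta>) else 0)"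
    unfolding mps_mult_def mvar_def by (rule sum.cong) (auto simp: fun_eq_iff)
  moreover have "0(a := 1) \<le> \<alpha> \<longleftrightarrow> 1 \<le> \<alpha> a"
    by (auto simp: le_fun_def)
  ultimately show ?thesis
    by (simp add: sum.delta')
qed

lemma mvar_mult_mvar:
  assumes "a \<in> V" "b \<in> V" "a \<noteq> b"
  shows "mps_mult (mvar a) (mvar b) = sqfree_mon {a, b}"
proof
  fix \<alpha> :: "_ \<Rightarrow> nat"
  have "1 \<le> \<alpha> a \<and> \<alpha> - 0(a := 1) = (\<lambda>y. if y = b then 1 else 0) \<longleftrightarrow>
        \<alpha> = (\<lambda>y. if y \<in> {a, b} then 1 else 0)"
  proof
    assume h: "1 \<le> \<alpha> a \<and> \<alpha> - 0(a := 1) = (\<lambda>y. if y = b then 1 else 0)"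
    show "\<alpha> = (\<lambda>y. if y \<in> {a, b} then 1 else 0)"
    proof
      fix y
      have "\<alpha> y - (0(a := 1)) y = (if y = b then 1 else 0)"
        using h by (simp add: fun_eq_iff)
      then show "\<alpha> y = (if y \<in> {a, b} then 1 else 0)"
        using h assms(3) by (auto split: if_splits)
    qed
  qed (use assms(3) in \<open>auto simp: fun_eq_iff\<close>)
  then show "mps_mult (mvar a) (mvar b) \<alpha> = sqfree_mon {a, b} \<alpha>"
    unfolding mps_mult_mvar[OF assms(1) mvar_closed[OF assms(2)]]
    by (simp only: mvar_def sqfree_mon_def if_if_eq_conj)
qed

lemma fgl_inv_var_closed:
  assumes "b \<in> V"
  shows "fgl_inv_var v b \<in> carrier (mps V)"
proof -
  have "\<alpha> \<in> mps_monomials V" if "\<forall>y. y \<noteq> b \<longrightarrow> \<alpha> y = 0" for \<alpha> :: "_ \<Rightarrow> nat"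
  proof -
    have "{x. \<alpha> x \<noteq> 0} \<subseteq> {b}"
      using that by auto
    then show ?thesis
      unfolding mps_monomials_def using assms by (blast intro: finite_subset)
  qed
  then show ?thesis
    by (auto simp: carrier_mps fgl_inv_var_def)
qed

lemma fgl_add_closed:
  assumes "f \<in> carrier (mps V)" "g \<in> carrier (mps V)"
  shows "fgl_add v f g \<in> carrier (mps V)"
proof -
  have "fgl_add v f g \<alpha> = 0" if "\<alpha> \<notin> mps_monomials V" for \<alpha>
  proof -
    have "f \<alpha> = 0" "g \<alpha> = 0"
      using assms that by (auto simp: carrier_mps)
    then show ?thesis
      using mps_mult_outside[OF assms that] by (simp add: fgl_add_def mps_smult_def)
  qed
  then show ?thesis
    unfolding carrier_mps by blast
qed

lemma fgl_sub_var_closed: "a \<in> V \<Longrightarrow> b \<in> V \<Longrightarrow> fgl_sub_var v a b \<in> carrier (mps V)"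
  unfolding fgl_sub_var_def by (intro fgl_add_closed mvar_closed fgl_inv_var_closed)

lemma fgl_add_inv_var:
  assumes "b \<in> V"
  shows "fgl_add v (mvar b) (fgl_inv_var v b) = 0"
proof
  fix \<alpha> :: "_ \<Rightarrow> nat"
  let ?\<chi> = "fgl_inv_var v b"
  have shift: "mps_mult (mvar b) ?\<chi> \<alpha> = (if 1 \<le> \<alpha> b then ?\<chi> (\<alpha> - 0(b := 1)) else 0)"
    using assms by (simp add: mps_mult_mvar fgl_inv_var_closed)
  show "fgl_add v (mvar b) ?\<chi> \<alpha> = 0 \<alpha>"
  proof (cases "\<forall>y. y \<noteq> b \<longrightarrow> \<alpha> y = 0")
    case True
    then have "?\<chi> \<alpha> = (if 1 \<le> \<alpha> b then - (v ^ (\<alpha> b - 1)) else 0)"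
      and "?\<chi> (\<alpha> - 0(b := 1)) = (if 2 \<le> \<alpha> b then - (v ^ (\<alpha> b - 2)) else 0)"
      and "mvar b \<alpha> = (if \<alpha> b = 1 then 1 else 0)"
      by (auto simp: fgl_inv_var_def mvar_def fun_eq_iff numeral_2_eq_2)
    then show ?thesis
      unfolding fgl_add_def minus_apply plus_fun_apply mps_smult_def shift
      by (cases "\<alpha> b"; cases "\<alpha> b - 1") auto
  next
    case False
    then have "?\<chi> \<alpha> = 0" "?\<chi> (\<alpha> - 0(b := 1)) = 0" "mvar b \<alpha> = 0"
      by (auto simp: fgl_inv_var_def mvar_def)
    then show ?thesis
      by (simp add: fgl_add_def shift mps_smult_def)
  qed
qed

locale mps_hom = ring_hom_cring "mps V :: (('v \<Rightarrow> nat) \<Rightarrow> 'r::comm_ring_1) ring" S h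
  for V and S (structure) and h
begin

lemma hom_mps_add:
  "f \<in> carrier (mps V) \<Longrightarrow> g \<in> carrier (mps V) \<Longrightarrow> h (f + g) = h f \<oplus>\<^bsub>S\<^esub> h g"
  using hom_add by (simp add: mps_ops)

lemma hom_mps_mult:
  "f \<in> carrier (mps V) \<Longrightarrow> g \<in> carrier (mps V) \<Longrightarrow> h (mps_mult f g) = h f \<otimes>\<^bsub>S\<^esub> h g"
  using hom_mult by (simp add: mps_ops)

lemma hom_mps_zero: "h 0 = \<zero>\<^bsub>S\<^esub>"
  using hom_zero by (simp add: mps_ops zero_fun_def)

lemma hom_mps_diff:
  "f \<in> carrier (mps V) \<Longrightarrow> g \<in> carrier (mps V) \<Longrightarrow> h (f - g) = h f \<ominus>\<^bsub>S\<^esub> h g"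
  by (simp add: mps_diff_eq a_minus_def)

lemma hom_mps_smult: "g \<in> carrier (mps V) \<Longrightarrow> h (mps_smult r g) = h (mps_const r) \<otimes>\<^bsub>S\<^esub> h g"
  by (simp add: mps_smult_eq mps_const_closed)

lemma hom_mps_pow: "f \<in> carrier (mps V) \<Longrightarrow> h (mps_pow f n) = h f [^]\<^bsub>S\<^esub> n"
  by (simp add: mps_pow_eq ring.hom_nat_pow)

lemma hom_fgl_add:
  assumes "f \<in> carrier (mps V)" "g \<in> carrier (mps V)"
  shows "h (fgl_add v f g) = h f \<oplus>\<^bsub>S\<^esub> h g \<ominus>\<^bsub>S\<^esub> h (mps_const v) \<otimes>\<^bsub>S\<^esub> (h f \<otimes>\<^bsub>S\<^esub> h g)"
proof -
  have "f + g \<in> carrier (mps V)"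
    using assms R.add.m_closed by (simp add: mps_ops)
  then show ?thesis
    using assms by (simp add: fgl_add_def hom_mps_diff hom_mps_add hom_mps_smult hom_mps_mult
                              mps_smult_closed mps_mult_closed)
qed

lemma hom_mixed_powers:
  assumes "f \<in> carrier (mps V)" "g \<in> carrier (mps V)"
  shows "h (\<Sum>i=1..m. mps_mult (mps_pow f (m + 1 - i)) (mps_pow g i)) = mixed_powers S (h f) (h g) m"
proof -
  have closed: "(\<lambda>i. mps_mult (mps_pow f (m + 1 - i)) (mps_pow g i)) \<in> {1..m} \<rightarrow> carrier (mps V)"
    using assms by (auto simp: mps_pow_eq intro!: mps_mult_closed)
  then show ?thesis
    unfolding mps_sum_eq[OF closed] mixed_powers_def
    by (simp add: comp_def, intro S.finsum_cong')
       (use assms in \<open>auto simp: hom_mps_mult hom_mps_pow mps_pow_eq[symmetric] mps_pow_closed\<close>)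
qed

lemma hom_fgl_sub_var:
  assumes "a \<in> V" "b \<in> V"
  shows "h (fgl_sub_var v a b) \<in> carrier S"
    and "h (fgl_sub_var v a b) \<otimes>\<^bsub>S\<^esub> (\<one>\<^bsub>S\<^esub> \<ominus>\<^bsub>S\<^esub> h (mps_const v) \<otimes>\<^bsub>S\<^esub> h (mvar b)) =
         h (mvar a) \<ominus>\<^bsub>S\<^esub> h (mvar b)"
    and "\<one>\<^bsub>S\<^esub> \<ominus>\<^bsub>S\<^esub> h (mps_const v) \<otimes>\<^bsub>S\<^esub> h (mvar b) \<in> Units S"
proof -
  note closed = assms mvar_closed fgl_inv_var_closed mps_const_closed mps_mult_closed mps_smult_closed
  have inverse: "h (mvar b) \<oplus>\<^bsub>S\<^esub> h (fgl_inv_var v b) \<ominus>\<^bsub>S\<^esub>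
                   h (mps_const v) \<otimes>\<^bsub>S\<^esub> (h (mvar b) \<otimes>\<^bsub>S\<^esub> h (fgl_inv_var v b)) = \<zero>\<^bsub>S\<^esub>"
    using hom_fgl_add[of "mvar b" "fgl_inv_var v b" v] fgl_add_inv_var[OF assms(2), of v]
    by (simp add: closed hom_mps_zero)
  have sub: "h (fgl_sub_var v a b) = h (mvar a) \<oplus>\<^bsub>S\<^esub> h (fgl_inv_var v b) \<ominus>\<^bsub>S\<^esub>
                                      h (mps_const v) \<otimes>\<^bsub>S\<^esub> (h (mvar a) \<otimes>\<^bsub>S\<^esub> h (fgl_inv_var v b))"
    unfolding fgl_sub_var_def by (simp add: hom_fgl_add closed)
  show "h (fgl_sub_var v a b) \<in> carrier S"
    unfolding sub by (simp add: closed)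
  show "h (fgl_sub_var v a b) \<otimes>\<^bsub>S\<^esub> (\<one>\<^bsub>S\<^esub> \<ominus>\<^bsub>S\<^esub> h (mps_const v) \<otimes>\<^bsub>S\<^esub> h (mvar b)) =
        h (mvar a) \<ominus>\<^bsub>S\<^esub> h (mvar b)"
       "\<one>\<^bsub>S\<^esub> \<ominus>\<^bsub>S\<^esub> h (mps_const v) \<otimes>\<^bsub>S\<^esub> h (mvar b) \<in> Units S"
    unfolding sub by (simp_all add: S.formal_inverse_factor[OF _ _ _ _ inverse, where y = "h (mvar a)"] closed)
qed

end

section \<open>Face rings of fans\<close>

lemma finite_rays:
  assumes "smooth_fan F"
  shows "finite (rays F)"
proof -
  have "(\<lambda>\<rho>. {\<rho>}) ` rays F \<subseteq> F"
    by (auto simp: rays_def)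
  then show ?thesis
    using assms by (auto simp: smooth_fan_def dest: finite_subset intro: finite_imageD inj_onI)
qed

lemma cone_subset_rays: "smooth_fan F \<Longrightarrow> \<theta> \<in> F \<Longrightarrow> \<theta> \<subseteq> rays F"
  by (auto simp: smooth_fan_def rays_def)

lemma star_subdivision_not_superset: "\<theta> \<in> star_subdivision F \<sigma> \<Longrightarrow> \<not> \<sigma> \<subseteq> \<theta>"
  by (auto simp: star_subdivision_def)

lemma rays_star_subdivision:
  assumes "smooth_fan F" "{r1, r2} \<in> F" "r1 \<noteq> r2"
  shows "rays (star_subdivision F {r1, r2}) = insert (r1 + r2) (rays F)"
proof -
  have faces: "\<tau> \<in> F" if "\<theta> \<in> F" "\<tau> \<subseteq> \<theta>" for \<theta> \<tau>
    using assms(1) that by (auto simp: smooth_fan_def)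
  have "(\<Sum>w\<in>{r1, r2}. w) = r1 + r2"
    using assms(3) by simp
  then show ?thesis
    using assms(2,3) by (auto simp: rays_def star_subdivision_def intro: faces)
qed

lemma
  fixes F :: "('d::finite \<Rightarrow> int) set set"
  assumes "finite (rays F)"
  shows ideal_SR_ideal: "ideal (SR_ideal F :: ((('d \<Rightarrow> int) \<Rightarrow> nat) \<Rightarrow> 'r::comm_ring_1) set) (mps (rays F))"
    and SR_ideal_nonface:
      "\<lbrakk>S \<subseteq> rays F; \<forall>\<theta>\<in>F. \<not> S \<subseteq> \<theta>\<rbrakk> \<Longrightarrow> sqfree_mon S \<in> (SR_ideal F :: ((('d \<Rightarrow> int) \<Rightarrow> nat) \<Rightarrow> 'r) set)"
proof -
  interpret cring "mps (rays F) :: ((('d \<Rightarrow> int) \<Rightarrow> nat) \<Rightarrow> 'r) ring"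
    by (rule cring_mps)
  have gens: "{sqfree_mon S | S. S \<subseteq> rays F \<and> (\<forall>\<theta>\<in>F. \<not> S \<subseteq> \<theta>)} \<subseteq> carrier (mps (rays F))"
    using assms finite_subset by (fastforce intro: sqfree_mon_closed)
  show "ideal (SR_ideal F :: ((('d \<Rightarrow> int) \<Rightarrow> nat) \<Rightarrow> 'r) set) (mps (rays F))"
    unfolding SR_ideal_def by (rule genideal_ideal[OF gens])
  show "sqfree_mon S \<in> (SR_ideal F :: ((('d \<Rightarrow> int) \<Rightarrow> nat) \<Rightarrow> 'r) set)"
    if "S \<subseteq> rays F" "\<forall>\<theta>\<in>F. \<not> S \<subseteq> \<theta>"
    unfolding SR_ideal_def using genideal_self[OF gens] that by blast
qed

lemma cring_face_ring:
  fixes F :: "('d::finite \<Rightarrow> int) set set"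
  assumes "finite (rays F)"
  shows "cring (face_ring F :: ((('d \<Rightarrow> int) \<Rightarrow> nat) \<Rightarrow> 'r::comm_ring_1) set ring)"
  unfolding face_ring_def by (rule ideal.quotient_is_cring[OF ideal_SR_ideal[OF assms] cring_mps])

lemma mps_hom_cls:
  fixes F :: "('d::finite \<Rightarrow> int) set set"
  assumes "finite (rays F)"
  shows "mps_hom (rays F) (face_ring F :: ((('d \<Rightarrow> int) \<Rightarrow> nat) \<Rightarrow> 'r::comm_ring_1) set ring) (cls F)"
proof -
  note I = ideal_SR_ideal[OF assms, where 'r = 'r]
  have "cls F = (a_r_coset (mps (rays F)) (SR_ideal F) :: _ \<Rightarrow> ((('d \<Rightarrow> int) \<Rightarrow> nat) \<Rightarrow> 'r) set)"
    by (simp add: fun_eq_iff cls_def)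
  then show ?thesis
    unfolding mps_hom_def face_ring_def
    by (intro ring_hom_cring.intro ring_hom_cring_axioms.intro cring_mps
              cring_face_ring[OF assms, unfolded face_ring_def]) (simp add: ideal.rcos_ring_hom[OF I])
qed

lemma cls_nonface_zero:
  fixes F :: "('d::finite \<Rightarrow> int) set set"
  assumes "finite (rays F)" "S \<subseteq> rays F" "\<forall>\<theta>\<in>F. \<not> S \<subseteq> \<theta>"
  shows "cls F (sqfree_mon S :: (('d \<Rightarrow> int) \<Rightarrow> nat) \<Rightarrow> 'r::comm_ring_1) =
         \<zero>\<^bsub>face_ring F :: ((('d \<Rightarrow> int) \<Rightarrow> nat) \<Rightarrow> 'r) set ring\<^esub>"
proof -
  interpret cring "mps (rays F) :: ((('d \<Rightarrow> int) \<Rightarrow> nat) \<Rightarrow> 'r) ring"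
    by (rule cring_mps)
  show ?thesis
    using SR_ideal_nonface[OF assms] a_rcos_zero[OF ideal_SR_ideal[OF assms(1)]]
    by (simp add: cls_def face_ring_def FactRing_def)
qed

section \<open>Push-forwards along a blow-up, abstractly\<close>

locale pushforward = ring_hom_cring P Q pb for P (structure) and Q (structure) and pb +
  fixes pf
  assumes pf_closed: "a \<in> carrier Q \<Longrightarrow> pf a \<in> carrier P"
    and pf_add: "a \<in> carrier Q \<Longrightarrow> b \<in> carrier Q \<Longrightarrow> pf (a \<oplus>\<^bsub>Q\<^esub> b) = pf a \<oplus> pf b"
    and projection_formula: "a \<in> carrier P \<Longrightarrow> b \<in> carrier Q \<Longrightarrow> pf (pb a \<otimes>\<^bsub>Q\<^esub> b) = a \<otimes> pf b"
    and pf_one: "pf \<one>\<^bsub>Q\<^esub> = \<one>"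
begin

lemma pf_a_inv: "a \<in> carrier Q \<Longrightarrow> pf (\<ominus>\<^bsub>Q\<^esub> a) = \<ominus> pf a"
  using projection_formula[of "\<ominus> \<one>" a] by (simp add: S.l_minus R.l_minus pf_closed)

lemma pf_minus: "a \<in> carrier Q \<Longrightarrow> b \<in> carrier Q \<Longrightarrow> pf (a \<ominus>\<^bsub>Q\<^esub> b) = pf a \<ominus> pf b"
  by (simp add: a_minus_def pf_add pf_a_inv)

lemma projection_formula': "a \<in> carrier P \<Longrightarrow> b \<in> carrier Q \<Longrightarrow> pf (b \<otimes>\<^bsub>Q\<^esub> pb a) = a \<otimes> pf b"
  by (simp add: S.m_comm[of b "pb a"] projection_formula)

lemma pf_pb: "a \<in> carrier P \<Longrightarrow> pf (pb a) = a"
  using projection_formula[of a "\<one>\<^bsub>Q\<^esub>"] by (simp add: pf_one)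

end

locale blowup_pushforward = pushforward +
  fixes x1 x2 c y1 y2 e
  assumes closed: "x1 \<in> carrier P" "x2 \<in> carrier P" "c \<in> carrier P"
      "y1 \<in> carrier Q" "y2 \<in> carrier Q" "e \<in> carrier Q"
    and pf_y1: "pf y1 = x1" and pf_y2: "pf y2 = x2"
    and pb_x1: "pb x1 = y1 \<oplus>\<^bsub>Q\<^esub> e \<ominus>\<^bsub>Q\<^esub> pb c \<otimes>\<^bsub>Q\<^esub> (y1 \<otimes>\<^bsub>Q\<^esub> e)"
    and pb_x2: "pb x2 = y2 \<oplus>\<^bsub>Q\<^esub> e \<ominus>\<^bsub>Q\<^esub> pb c \<otimes>\<^bsub>Q\<^esub> (y2 \<otimes>\<^bsub>Q\<^esub> e)"
    and y1_y2: "y1 \<otimes>\<^bsub>Q\<^esub> y2 = \<zero>\<^bsub>Q\<^esub>"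
begin

lemma blowup_pushforward_swap: "blowup_pushforward P Q pb pf x2 x1 c y2 y1 e"
  using closed pf_y1 pf_y2 pb_x1 pb_x2 y1_y2
  by unfold_locales (simp_all add: S.m_comm)

lemma closed_pb [simp]: "pb x1 \<in> carrier Q" "pb x2 \<in> carrier Q" "pb c \<in> carrier Q"
  using closed by simp_all

lemma y1_e: "y1 \<otimes>\<^bsub>Q\<^esub> e = y1 \<otimes>\<^bsub>Q\<^esub> pb x2"
proof -
  have "y1 \<otimes>\<^bsub>Q\<^esub> pb x2 = y1 \<otimes>\<^bsub>Q\<^esub> y2 \<oplus>\<^bsub>Q\<^esub> y1 \<otimes>\<^bsub>Q\<^esub> e \<ominus>\<^bsub>Q\<^esub> pb c \<otimes>\<^bsub>Q\<^esub> (y1 \<otimes>\<^bsub>Q\<^esub> y2) \<otimes>\<^bsub>Q\<^esub> e"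
    unfolding pb_x2 using closed closed_pb by algebra
  then show ?thesis
    using closed by (simp add: y1_y2 a_minus_def)
qed

lemma pf_e: "pf e = c \<otimes> (x1 \<otimes> x2)"
proof -
  have "x1 = pf (pb x1)"
    using closed by (simp add: pf_pb)
  also have "\<dots> = x1 \<oplus> pf e \<ominus> c \<otimes> (x2 \<otimes> x1)"
    unfolding pb_x1 y1_e using closed
    by (simp add: pf_add pf_minus projection_formula projection_formula' pf_y1)
  finally have "x1 = x1 \<oplus> pf e \<ominus> c \<otimes> (x2 \<otimes> x1)" .
  moreover have "pf e = (x1 \<oplus> pf e \<ominus> c \<otimes> (x2 \<otimes> x1)) \<ominus> x1 \<oplus> c \<otimes> (x1 \<otimes> x2)"
    using closed pf_closed[of e] by algebra
  ultimately show ?thesis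
    using closed by (simp add: R.m_comm[of x2 x1] R.r_neg a_minus_def)
qed

lemma e_square: "e \<otimes>\<^bsub>Q\<^esub> e = (pb x1 \<oplus>\<^bsub>Q\<^esub> pb x2) \<otimes>\<^bsub>Q\<^esub> e \<ominus>\<^bsub>Q\<^esub> pb x1 \<otimes>\<^bsub>Q\<^esub> pb x2"
proof -
  have "(pb x1 \<ominus>\<^bsub>Q\<^esub> e) \<otimes>\<^bsub>Q\<^esub> (pb x2 \<ominus>\<^bsub>Q\<^esub> e) =
        (y1 \<otimes>\<^bsub>Q\<^esub> y2) \<otimes>\<^bsub>Q\<^esub> (\<one>\<^bsub>Q\<^esub> \<ominus>\<^bsub>Q\<^esub> pb c \<otimes>\<^bsub>Q\<^esub> e) \<otimes>\<^bsub>Q\<^esub> (\<one>\<^bsub>Q\<^esub> \<ominus>\<^bsub>Q\<^esub> pb c \<otimes>\<^bsub>Q\<^esub> e)"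
    unfolding pb_x1 pb_x2 using closed closed_pb by algebra
  then have "(pb x1 \<ominus>\<^bsub>Q\<^esub> e) \<otimes>\<^bsub>Q\<^esub> (pb x2 \<ominus>\<^bsub>Q\<^esub> e) = \<zero>\<^bsub>Q\<^esub>"
    using closed by (simp add: y1_y2)
  moreover have "e \<otimes>\<^bsub>Q\<^esub> e = (pb x1 \<oplus>\<^bsub>Q\<^esub> pb x2) \<otimes>\<^bsub>Q\<^esub> e \<ominus>\<^bsub>Q\<^esub> pb x1 \<otimes>\<^bsub>Q\<^esub> pb x2 \<oplus>\<^bsub>Q\<^esub>
                     (pb x1 \<ominus>\<^bsub>Q\<^esub> e) \<otimes>\<^bsub>Q\<^esub> (pb x2 \<ominus>\<^bsub>Q\<^esub> e)"
    using closed closed_pb by algebra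
  ultimately show ?thesis
    using closed by simp
qed

lemma pf_e_pow_rec:
  "pf (e [^]\<^bsub>Q\<^esub> Suc (Suc n)) = (x1 \<oplus> x2) \<otimes> pf (e [^]\<^bsub>Q\<^esub> Suc n) \<ominus> (x1 \<otimes> x2) \<otimes> pf (e [^]\<^bsub>Q\<^esub> n)"
proof -
  have "e [^]\<^bsub>Q\<^esub> Suc (Suc n) = e [^]\<^bsub>Q\<^esub> n \<otimes>\<^bsub>Q\<^esub> (e \<otimes>\<^bsub>Q\<^esub> e)"
    using closed by (simp add: S.m_assoc)
  also have "\<dots> = pb (x1 \<oplus> x2) \<otimes>\<^bsub>Q\<^esub> e [^]\<^bsub>Q\<^esub> Suc n \<ominus>\<^bsub>Q\<^esub> pb (x1 \<otimes> x2) \<otimes>\<^bsub>Q\<^esub> e [^]\<^bsub>Q\<^esub> n"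
    unfolding e_square hom_add[OF closed(1,2)] hom_mult[OF closed(1,2)] S.nat_pow_Suc[of e n]
    using closed closed_pb S.nat_pow_closed[of e n] by algebra
  finally show ?thesis
    using closed by (simp add: pf_minus projection_formula del: hom_add hom_mult S.nat_pow_Suc)
qed

lemma pf_e_pow:
  "pf (e [^]\<^bsub>Q\<^esub> Suc n) = c \<otimes> mixed_powers P x1 x2 (Suc n) \<ominus> mixed_powers P x1 x2 n"
  using closed pf_e pf_e_pow_rec
  by (intro R.mixed_powers_recurrence_solution[where p = "\<lambda>n. pf (e [^]\<^bsub>Q\<^esub> n)"])
     (simp_all add: pf_closed pf_one)

lemma y1_pow_e_pow:
  fixes k t :: nat
  shows "y1 [^]\<^bsub>Q\<^esub> Suc k \<otimes>\<^bsub>Q\<^esub> e [^]\<^bsub>Q\<^esub> t = pb (x2 [^] t) \<otimes>\<^bsub>Q\<^esub> y1 [^]\<^bsub>Q\<^esub> Suc k"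
proof (induction t)
  case 0
  then show ?case
    using closed by (simp del: S.nat_pow_Suc)
next
  case (Suc t)
  note closed' = closed closed_pb S.nat_pow_closed[of y1 k] S.nat_pow_closed[of e t]
    R.nat_pow_closed[of x2 t] hom_closed[of "x2 [^] t"]
  have "y1 [^]\<^bsub>Q\<^esub> Suc k \<otimes>\<^bsub>Q\<^esub> e [^]\<^bsub>Q\<^esub> Suc t =
        (y1 [^]\<^bsub>Q\<^esub> Suc k \<otimes>\<^bsub>Q\<^esub> e [^]\<^bsub>Q\<^esub> t) \<otimes>\<^bsub>Q\<^esub> e"
    using closed' by (simp add: S.m_assoc)
  also have "\<dots> = pb (x2 [^] t) \<otimes>\<^bsub>Q\<^esub> y1 [^]\<^bsub>Q\<^esub> k \<otimes>\<^bsub>Q\<^esub> (y1 \<otimes>\<^bsub>Q\<^esub> e)"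
    unfolding Suc using closed' by (simp add: S.m_assoc)
  also have "\<dots> = pb (x2 [^] Suc t) \<otimes>\<^bsub>Q\<^esub> y1 [^]\<^bsub>Q\<^esub> Suc k"
    unfolding y1_e using closed' by (simp add: S.m_ac)
  finally show ?case .
qed

lemma y1_pow_Suc_Suc:
  "pb (\<one> \<ominus> c \<otimes> x2) \<otimes>\<^bsub>Q\<^esub> y1 [^]\<^bsub>Q\<^esub> Suc (Suc k) = pb (x1 \<ominus> x2) \<otimes>\<^bsub>Q\<^esub> y1 [^]\<^bsub>Q\<^esub> Suc k"
proof -
  note closed' = closed closed_pb S.nat_pow_closed[of y1 k]
  have "y1 \<otimes>\<^bsub>Q\<^esub> (pb x1 \<ominus>\<^bsub>Q\<^esub> pb x2) =
        y1 \<otimes>\<^bsub>Q\<^esub> y1 \<oplus>\<^bsub>Q\<^esub> y1 \<otimes>\<^bsub>Q\<^esub> e \<ominus>\<^bsub>Q\<^esub> pb c \<otimes>\<^bsub>Q\<^esub> y1 \<otimes>\<^bsub>Q\<^esub> (y1 \<otimes>\<^bsub>Q\<^esub> e) \<ominus>\<^bsub>Q\<^esub> y1 \<otimes>\<^bsub>Q\<^esub> pb x2"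
    unfolding pb_x1 using closed' by algebra
  also have "\<dots> = y1 \<otimes>\<^bsub>Q\<^esub> y1 \<otimes>\<^bsub>Q\<^esub> (\<one>\<^bsub>Q\<^esub> \<ominus>\<^bsub>Q\<^esub> pb c \<otimes>\<^bsub>Q\<^esub> pb x2)"
    unfolding y1_e using closed' by algebra
  finally have square: "y1 \<otimes>\<^bsub>Q\<^esub> y1 \<otimes>\<^bsub>Q\<^esub> (\<one>\<^bsub>Q\<^esub> \<ominus>\<^bsub>Q\<^esub> pb c \<otimes>\<^bsub>Q\<^esub> pb x2) =
                               y1 \<otimes>\<^bsub>Q\<^esub> (pb x1 \<ominus>\<^bsub>Q\<^esub> pb x2)" ..
  have "pb (\<one> \<ominus> c \<otimes> x2) = \<one>\<^bsub>Q\<^esub> \<ominus>\<^bsub>Q\<^esub> pb c \<otimes>\<^bsub>Q\<^esub> pb x2" "pb (x1 \<ominus> x2) = pb x1 \<ominus>\<^bsub>Q\<^esub> pb x2"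
    using closed by (simp_all add: a_minus_def)
  then have "pb (\<one> \<ominus> c \<otimes> x2) \<otimes>\<^bsub>Q\<^esub> y1 [^]\<^bsub>Q\<^esub> Suc (Suc k) =
             y1 [^]\<^bsub>Q\<^esub> k \<otimes>\<^bsub>Q\<^esub> (y1 \<otimes>\<^bsub>Q\<^esub> y1 \<otimes>\<^bsub>Q\<^esub> (\<one>\<^bsub>Q\<^esub> \<ominus>\<^bsub>Q\<^esub> pb c \<otimes>\<^bsub>Q\<^esub> pb x2))"
    and "pb (x1 \<ominus> x2) \<otimes>\<^bsub>Q\<^esub> y1 [^]\<^bsub>Q\<^esub> Suc k = y1 [^]\<^bsub>Q\<^esub> k \<otimes>\<^bsub>Q\<^esub> (y1 \<otimes>\<^bsub>Q\<^esub> (pb x1 \<ominus>\<^bsub>Q\<^esub> pb x2))"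
    unfolding S.nat_pow_Suc using closed' by algebra+
  then show ?thesis
    unfolding square by simp
qed

lemma pf_y1_pow:
  assumes d: "d \<in> carrier P" "d \<otimes> (\<one> \<ominus> c \<otimes> x2) = x1 \<ominus> x2" and unit: "\<one> \<ominus> c \<otimes> x2 \<in> Units P"
  shows "pf (y1 [^]\<^bsub>Q\<^esub> Suc k) = x1 \<otimes> d [^] k"
proof (induction k)
  case 0
  then show ?case
    using closed by (simp add: pf_y1)
next
  case (Suc k)
  let ?u = "\<one> \<ominus> c \<otimes> x2"
  note closed' = closed d(1) R.nat_pow_closed[of d k]
  have "?u \<otimes> pf (y1 [^]\<^bsub>Q\<^esub> Suc (Suc k)) = (x1 \<ominus> x2) \<otimes> pf (y1 [^]\<^bsub>Q\<^esub> Suc k)"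
    using closed y1_pow_Suc_Suc[of k] projection_formula[of ?u "y1 [^]\<^bsub>Q\<^esub> Suc (Suc k)"]
      projection_formula[of "x1 \<ominus> x2" "y1 [^]\<^bsub>Q\<^esub> Suc k"]
    by (simp del: S.nat_pow_Suc hom_add hom_mult)
  also have "\<dots> = ?u \<otimes> (x1 \<otimes> d [^] Suc k)"
    unfolding Suc d(2)[symmetric] using closed' by (simp add: R.m_ac)
  finally show ?case
    using unit closed' pf_closed by (simp del: S.nat_pow_Suc R.nat_pow_Suc)
qed

lemma pf_y1_pow_e_pow:
  fixes k t :: nat
  assumes "d \<in> carrier P" "d \<otimes> (\<one> \<ominus> c \<otimes> x2) = x1 \<ominus> x2" "\<one> \<ominus> c \<otimes> x2 \<in> Units P"
  shows "pf (y1 [^]\<^bsub>Q\<^esub> Suc k \<otimes>\<^bsub>Q\<^esub> e [^]\<^bsub>Q\<^esub> t) = x1 \<otimes> (x2 [^] t \<otimes> d [^] k)"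
proof -
  have "pf (y1 [^]\<^bsub>Q\<^esub> Suc k \<otimes>\<^bsub>Q\<^esub> e [^]\<^bsub>Q\<^esub> t) = x2 [^] t \<otimes> pf (y1 [^]\<^bsub>Q\<^esub> Suc k)"
    unfolding y1_pow_e_pow using closed by (intro projection_formula) simp_all
  then show ?thesis
    unfolding pf_y1_pow[OF assms] using closed assms(1) by (simp add: R.m_lcomm)
qed

end

section \<open>The toric blow-up\<close>

lemma blowup_pushforward_face_rings:
  fixes Fan :: "('d::finite \<Rightarrow> int) set set" and r1 r2 :: "'d \<Rightarrow> int" and v :: "'r::comm_ring_1"
  defines "F' \<equiv> star_subdivision Fan {r1, r2}"
  assumes fan: "smooth_fan Fan" and sigma: "{r1, r2} \<in> Fan" "r1 \<noteq> r2"
    and pf: "pushforward (face_ring Fan) (face_ring F') pb pf"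
    and pb_const: "pb (cls Fan (mps_const v)) = cls F' (mps_const v)"
    and pb_var: "\<And>\<rho>. \<rho> \<in> {r1, r2} \<Longrightarrow> pb (cls Fan (mvar \<rho>)) = cls F' (fgl_add v (mvar \<rho>) (mvar (r1 + r2)))"
    and pf_var: "\<And>\<rho>. \<rho> \<in> rays Fan \<Longrightarrow> pf (cls F' (mvar \<rho>)) = cls Fan (mvar \<rho>)"
  shows "blowup_pushforward (face_ring Fan) (face_ring F') pb pf
           (cls Fan (mvar r1)) (cls Fan (mvar r2)) (cls Fan (mps_const v))
           (cls F' (mvar r1)) (cls F' (mvar r2)) (cls F' (mvar (r1 + r2)))"
proof -
  have rays: "rays F' = insert (r1 + r2) (rays Fan)" "r1 \<in> rays Fan" "r2 \<in> rays Fan"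
    using rays_star_subdivision[OF fan sigma] cone_subset_rays[OF fan sigma(1)] by (auto simp: F'_def)
  have finite: "finite (rays Fan)" "finite (rays F')"
    using finite_rays[OF fan] rays(1) by simp_all
  interpret P: mps_hom "rays Fan" "face_ring Fan :: ((('d \<Rightarrow> int) \<Rightarrow> nat) \<Rightarrow> 'r) set ring" "cls Fan"
    by (rule mps_hom_cls[OF finite(1)])
  interpret Q: mps_hom "rays F'" "face_ring F' :: ((('d \<Rightarrow> int) \<Rightarrow> nat) \<Rightarrow> 'r) set ring" "cls F'"
    by (rule mps_hom_cls[OF finite(2)])
  note closed = rays mvar_closed mps_const_closed
  have "cls F' (mvar r1) \<otimes>\<^bsub>face_ring F' :: ((('d \<Rightarrow> int) \<Rightarrow> nat) \<Rightarrow> 'r) set ring\<^esub> cls F' (mvar r2) =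
        cls F' (mps_mult (mvar r1) (mvar r2))"
    by (rule Q.hom_mps_mult[symmetric]) (simp_all add: closed)
  also have "\<dots> = cls F' (sqfree_mon {r1, r2})"
    using sigma(2) by (simp add: mvar_mult_mvar[of r1 "rays F'" r2] rays)
  also have "\<dots> = \<zero>\<^bsub>face_ring F'\<^esub>"
    by (rule cls_nonface_zero[OF finite(2)])
       (use rays star_subdivision_not_superset in \<open>auto simp: F'_def\<close>)
  finally show ?thesis
    using pf pb_const pb_var pf_var
    by (intro blowup_pushforward.intro blowup_pushforward_axioms.intro) (simp_all add: Q.hom_fgl_add closed)
qed

context
  fixes F F' :: "('d::finite \<Rightarrow> int) set set" and a b \<epsilon> :: "'d \<Rightarrow> int" and v :: "'r::comm_ring_1"
    and pb pf
  assumes finite: "finite (rays F)" "finite (rays F')"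
    and rays: "a \<in> rays F" "b \<in> rays F" "rays F \<subseteq> rays F'" "\<epsilon> \<in> rays F'"
    and blowup: "blowup_pushforward (face_ring F) (face_ring F') pb pf
                   (cls F (mvar a)) (cls F (mvar b)) (cls F (mps_const v))
                   (cls F' (mvar a)) (cls F' (mvar b)) (cls F' (mvar \<epsilon>))"
begin

interpretation P: mps_hom "rays F" "face_ring F :: ((('d \<Rightarrow> int) \<Rightarrow> nat) \<Rightarrow> 'r) set ring" "cls F"
  by (rule mps_hom_cls[OF finite(1)])

interpretation Q: mps_hom "rays F'" "face_ring F' :: ((('d \<Rightarrow> int) \<Rightarrow> nat) \<Rightarrow> 'r) set ring" "cls F'"
  by (rule mps_hom_cls[OF finite(2)])

interpretation blowup_pushforward "face_ring F" "face_ring F'" pb pf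
  "cls F (mvar a)" "cls F (mvar b)" "cls F (mps_const v)" "cls F' (mvar a)" "cls F' (mvar b)" "cls F' (mvar \<epsilon>)"
  by (rule blowup)

lemmas carrier_facts = rays rays(1,2)[THEN subsetD[OF rays(3)]] mvar_closed mps_const_closed mps_mult_closed
  mps_pow_closed mps_smult_closed

lemma pf_exceptional: "pf (cls F' (mvar \<epsilon>)) = cls F (mps_smult v (mps_mult (mvar a) (mvar b)))"
  using pf_e by (simp add: P.hom_mps_smult P.hom_mps_mult carrier_facts)

lemma pf_exceptional_pow:
  assumes "n \<ge> 1"
  shows "pf (cls F' (mps_pow (mvar \<epsilon>) n)) =
         cls F (mps_smult v (\<Sum>i=1..n. mps_mult (mps_pow (mvar a) (n + 1 - i)) (mps_pow (mvar b) i))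
                - (\<Sum>i=1..n-1. mps_mult (mps_pow (mvar a) (n - i)) (mps_pow (mvar b) i)))"
proof -
  have sums_closed: "(\<Sum>i\<in>I. mps_mult (mps_pow (mvar a) (k i)) (mps_pow (mvar b) i)) \<in> carrier (mps (rays F))"
    for I k
    by (rule mps_sum_closed) (simp add: carrier_facts)
  have "cls F (\<Sum>i=1..n-1. mps_mult (mps_pow (mvar a) (n - i)) (mps_pow (mvar b) i)) =
        mixed_powers (face_ring F :: ((('d \<Rightarrow> int) \<Rightarrow> nat) \<Rightarrow> 'r) set ring)
          (cls F (mvar a)) (cls F (mvar b)) (n - 1)"
    using P.hom_mixed_powers[of "mvar a" "mvar b" "n - 1"] assms by (simp add: carrier_facts)
  moreover have "pf (cls F' (mps_pow (mvar \<epsilon>) n)) =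
                 pf (cls F' (mvar \<epsilon>) [^]\<^bsub>face_ring F' :: ((('d \<Rightarrow> int) \<Rightarrow> nat) \<Rightarrow> 'r) set ring\<^esub> Suc (n - 1))"
    using assms by (simp add: Q.hom_mps_pow carrier_facts del: Q.S.nat_pow_Suc)
  ultimately show ?thesis
    using assms pf_e_pow[of "n - 1"] P.hom_mixed_powers[of "mvar a" "mvar b" n]
    by (simp add: P.hom_mps_diff P.hom_mps_smult sums_closed carrier_facts
             del: Q.S.nat_pow_Suc)
qed

lemma pf_divisor_pow_exceptional_pow:
  assumes "s \<ge> 1"
  shows "pf (cls F' (mps_mult (mps_pow (mvar a) s) (mps_pow (mvar \<epsilon>) t))) =
         cls F (mps_mult (mvar a) (mps_mult (mps_pow (mvar b) t) (mps_pow (fgl_sub_var v a b) (s - 1))))"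
proof -
  obtain k where s: "s = Suc k"
    using assms by (cases s) auto
  note sub = P.hom_fgl_sub_var[OF rays(1,2), of v]
  show ?thesis
    using pf_y1_pow_e_pow[OF sub(1-3), of k t]
    by (simp add: s Q.hom_mps_mult Q.hom_mps_pow P.hom_mps_mult P.hom_mps_pow carrier_facts
                  fgl_sub_var_closed del: Q.S.nat_pow_Suc)
qed

end

theorem theorem5p1:
  fixes Fan :: "('d::finite \<Rightarrow> int) set set"
    and r1 r2 :: "'d \<Rightarrow> int"
    and v :: "'r::comm_ring_1"
    and pb pf :: "((('d \<Rightarrow> int) \<Rightarrow> nat) \<Rightarrow> 'r) set \<Rightarrow> ((('d \<Rightarrow> int) \<Rightarrow> nat) \<Rightarrow> 'r) set"
  assumes fan: "smooth_fan Fan"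
    and sigma: "{r1, r2} \<in> Fan" "r1 \<noteq> r2"
    and pb_hom: "pb \<in> ring_hom (face_ring Fan) (face_ring (star_subdivision Fan {r1, r2}))"
    and pb_alg: "\<forall>r. pb (cls Fan (mps_const r)) = cls (star_subdivision Fan {r1, r2}) (mps_const r)"
    and pb_out: "\<forall>\<rho>\<in>rays Fan - {r1, r2}.
                   pb (cls Fan (mvar \<rho>)) = cls (star_subdivision Fan {r1, r2}) (mvar \<rho>)"
    and pb_in: "\<forall>\<rho>\<in>{r1, r2}.
                   pb (cls Fan (mvar \<rho>)) =
                   cls (star_subdivision Fan {r1, r2}) (fgl_add v (mvar \<rho>) (mvar (r1 + r2)))"
    and pf_fun: "pf \<in> carrier (face_ring (star_subdivision Fan {r1, r2})) \<rightarrow> carrier (face_ring Fan)"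
    and pf_add: "\<forall>a\<in>carrier (face_ring (star_subdivision Fan {r1, r2})).
                 \<forall>b\<in>carrier (face_ring (star_subdivision Fan {r1, r2})).
                   pf (a \<oplus>\<^bsub>face_ring (star_subdivision Fan {r1, r2})\<^esub> b) =
                   pf a \<oplus>\<^bsub>face_ring Fan\<^esub> pf b"
    and pf_lin: "\<forall>a\<in>carrier (face_ring Fan).
                 \<forall>b\<in>carrier (face_ring (star_subdivision Fan {r1, r2})).
                   pf (pb a \<otimes>\<^bsub>face_ring (star_subdivision Fan {r1, r2})\<^esub> b) =
                   a \<otimes>\<^bsub>face_ring Fan\<^esub> pf b"
    and pf_one: "pf \<one>\<^bsub>face_ring (star_subdivision Fan {r1, r2})\<^esub> = \<one>\<^bsub>face_ring Fan\<^esub>"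
    and pf_var: "\<forall>\<rho>\<in>rays Fan.
                   pf (cls (star_subdivision Fan {r1, r2}) (mvar \<rho>)) = cls Fan (mvar \<rho>)"
  shows "pf (cls (star_subdivision Fan {r1, r2}) (mvar (r1 + r2))) =
           cls Fan (mps_smult v (mps_mult (mvar r1) (mvar r2)))
       \<and> (\<forall>n::nat. n \<ge> 2 \<longrightarrow>
            pf (cls (star_subdivision Fan {r1, r2}) (mps_pow (mvar (r1 + r2)) n)) =
            cls Fan (mps_smult v (\<Sum>i=1..n. mps_mult (mps_pow (mvar r1) (n + 1 - i)) (mps_pow (mvar r2) i))
                     - (\<Sum>i=1..n-1. mps_mult (mps_pow (mvar r1) (n - i)) (mps_pow (mvar r2) i))))
       \<and> (\<forall>a b (s::nat) (t::nat). {a, b} = {r1, r2} \<and> a \<noteq> b \<and> s \<ge> 1 \<longrightarrow>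
            pf (cls (star_subdivision Fan {r1, r2})
                  (mps_mult (mps_pow (mvar a) s) (mps_pow (mvar (r1 + r2)) t))) =
            cls Fan (mps_mult (mvar a) (mps_mult (mps_pow (mvar b) t)
                        (mps_pow (fgl_sub_var v a b) (s - 1)))))"
proof -
  let ?F' = "star_subdivision Fan {r1, r2}"
  let ?P = "face_ring Fan :: ((('d \<Rightarrow> int) \<Rightarrow> nat) \<Rightarrow> 'r) set ring"
  let ?Q = "face_ring ?F' :: ((('d \<Rightarrow> int) \<Rightarrow> nat) \<Rightarrow> 'r) set ring"
  have rays: "r1 \<in> rays Fan" "r2 \<in> rays Fan" "rays Fan \<subseteq> rays ?F'" "r1 + r2 \<in> rays ?F'"
    using cone_subset_rays[OF fan sigma(1)] rays_star_subdivision[OF fan sigma] by auto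
  have finite: "finite (rays Fan)" "finite (rays ?F')"
    using finite_rays[OF fan] rays_star_subdivision[OF fan sigma] by simp_all
  have "pushforward ?P ?Q pb pf"
    using pb_hom pf_fun pf_add pf_lin pf_one
    by (intro pushforward.intro pushforward_axioms.intro ring_hom_cring.intro ring_hom_cring_axioms.intro
          cring_face_ring finite) auto
  then have blowup: "blowup_pushforward ?P ?Q pb pf (cls Fan (mvar r1)) (cls Fan (mvar r2))
                       (cls Fan (mps_const v)) (cls ?F' (mvar r1)) (cls ?F' (mvar r2)) (cls ?F' (mvar (r1 + r2)))"
    using pb_alg pb_in pf_var by (intro blowup_pushforward_face_rings[OF fan sigma]) auto
  note swapped = blowup_pushforward.blowup_pushforward_swap[OF blowup]
  have pf_divisors:
    "pf (cls ?F' (mps_mult (mps_pow (mvar a) s) (mps_pow (mvar (r1 + r2)) t))) =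
     cls Fan (mps_mult (mvar a) (mps_mult (mps_pow (mvar b) t) (mps_pow (fgl_sub_var v a b) (s - 1))))"
    if "{a, b} = {r1, r2}" "a \<noteq> b" "1 \<le> s" for a b and s t :: nat
  proof -
    from that(1,2) consider "a = r1" "b = r2" | "a = r2" "b = r1"
      by (metis doubleton_eq_iff)
    then show ?thesis
      using pf_divisor_pow_exceptional_pow[OF finite rays blowup that(3)]
        pf_divisor_pow_exceptional_pow[OF finite rays(2,1,3,4) swapped that(3)]
      by cases simp_all
  qed
  show ?thesis
    using pf_exceptional[OF finite rays blowup] pf_exceptional_pow[OF finite rays blowup] pf_divisors
    by simp
qed

end
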